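(* For all positive integers $T$ and $k$, \[ \mathrm{LCS}_T(2T-1,\mathcal P_k)\geq k^{1/\binom{2T-1}{T}}. \]
   Context: $\mathcal{P}_k$ is the set of permutations on $k$ letters (words over $\{1,\dots,k\}$ in which each letter occurs exactly once). For a set $\mathcal W$ of words, $\mathrm{LCS}(\mathcal W)$ is the length of a longest word that is a subsequence (letters in order, not necessarily consecutive) of every word in $\mathcal W$; $\mathrm{LCS}_T(\mathcal W)=\max\mathrm{LCS}(\mathcal W')$ over subsets $\mathcal W'\subset\mathcal W$ of size $T$; and for a family $\mathcal F$, $\mathrm{LCS}_T(t,\mathcal F)=\min\mathrm{LCS}_T(\mathcal W)$ over all $t$-element subsets $\mathcal W\subset\mathcal F$. *)

theory Defs
  imports Complex_Main "HOL-Library.Sublist" "HOL-Library.Extended_Real"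
begin

definition perms :: "nat \<Rightarrow> nat list set" where
  "perms k = {w. distinct w \<and> set w = {1..k}}"

definition LCS :: "'a list set \<Rightarrow> nat" where
  "LCS W = Max {length u | u. \<forall>w\<in>W. subseq u w}"

definition LCS_T :: "nat \<Rightarrow> 'a list set \<Rightarrow> nat" where
  "LCS_T T W = Max {LCS W' | W'. W' \<subseteq> W \<and> card W' = T}"

text \<open>LCS_T(t,F): minimum of LCS_T over t-element subsets of F
  (as an extended real; the minimum over the empty family is +infinity).\<close>
definition LCS_T_fam :: "nat \<Rightarrow> nat \<Rightarrow> 'a list set \<Rightarrow> ereal" where
  "LCS_T_fam T t F = (INF W \<in> {W. W \<subseteq> F \<and> card W = t}. ereal (real (LCS_T T W)))"

end

theory Submission
  imports Defs "HOL-Library.FuncSet"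
begin

text \<open>For a set S of words and a letter x, let f(S, x) = lcs_ending S x be the length of a longest
  common subsequence of S ending in x. If x precedes y in every word of S, appending y to such a
  subsequence shows f(S, x) < f(S, y). Given 2T - 1 permutations and letters x \<noteq> y, some T of
  them agree on the relative order of x and y, so the maps S \<mapsto> f(S, x) on the T-subsets S
  separate the k letters. Their values lie in {1..L} with L = LCS_T, whence
  k \<le> L ^ (2T-1 choose T).\<close>

lemma set_subseq_subset: "subseq xs ys \<Longrightarrow> set xs \<subseteq> set ys"
  by (induction rule: list_emb.induct) auto

lemma subseq_snoc_imp_subseq_prefix:
  assumes "subseq (u @ [x]) (a @ x # c)" and "x \<notin> set c"
  shows "subseq u a"
  using assms(1)
proof (induction a arbitrary: u)
  case Nil
  show ?case
  proof (cases u)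
    case (Cons v u')
    with Nil have "subseq (u' @ [x]) c"
      by (auto split: if_splits dest: subseq_Cons')
    then have "x \<in> set c"
      by (auto dest: set_subseq_subset)
    with assms(2) show ?thesis by simp
  qed simp
next
  case (Cons b a)
  show ?case
  proof (cases u)
    case (Cons v u')
    with Cons.prems have "(v = b \<and> subseq (u' @ [x]) (a @ x # c)) \<or> subseq (u @ [x]) (a @ x # c)"
      by (auto split: if_splits)
    with Cons.IH[of u'] Cons.IH[of u] show ?thesis
      unfolding \<open>u = v # u'\<close> by (auto dest: subseq_Cons')
  qed simp
qed

lemma subseq_pair_or_swap:
  assumes "x \<in> set w" and "y \<in> set w" and "x \<noteq> y"
  shows "subseq [x, y] w \<or> subseq [y, x] w"
proof -
  obtain a c where w: "w = a @ x # c"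
    using assms(1) split_list by metis
  show ?thesis
  proof (cases "y \<in> set c")
    case True
    then have "subseq [x, y] (x # c)"
      by (simp add: subseq_singleton_left)
    then show ?thesis
      unfolding w by (blast intro: subseq_drop_many)
  next
    case False
    with assms w obtain d e where "a = d @ y # e"
      by (auto dest: split_list)
    then have "subseq [y, x] (y # e @ x # c)"
      by (simp add: subseq_singleton_left)
    then show ?thesis
      unfolding w \<open>a = d @ y # e\<close> by (auto intro: subseq_drop_many)
  qed
qed

lemma subseq_snoc_extend:
  assumes "distinct w" and "subseq (u @ [x]) w" and "subseq [x, y] w"
  shows "subseq (u @ [x, y]) w"
proof -
  obtain a v c where w: "w = a @ v # c" and "v = x" and "subseq [y] c"
    using list_emb_ConsD[OF assms(3)] by blast
  then have xy: "subseq [x, y] (x # c)"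
    by simp
  have "x \<notin> set c"
    using assms(1) w \<open>v = x\<close> by simp
  moreover have "subseq (u @ [x]) (a @ x # c)"
    using assms(2) w \<open>v = x\<close> by simp
  ultimately have "subseq u a"
    by (blast intro: subseq_snoc_imp_subseq_prefix)
  from list_emb_append_mono[OF this xy] show ?thesis
    unfolding w \<open>v = x\<close> by simp
qed

definition lcs_ending :: "'a list set \<Rightarrow> 'a \<Rightarrow> nat" where
  "lcs_ending S x = Max {length (u @ [x]) | u. \<forall>w\<in>S. subseq (u @ [x]) w}"

lemma finite_common_subseq_lengths:
  assumes "w0 \<in> S"
  shows "finite {length u | u. \<forall>w\<in>S. subseq u w}"
proof (rule finite_subset)
  show "{length u | u. \<forall>w\<in>S. subseq u w} \<subseteq> {..length w0}"
    using assms by (auto dest: list_emb_length)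
qed simp

lemma finite_lcs_ending_candidates:
  assumes "w0 \<in> S"
  shows "finite {length (u @ [x]) | u. \<forall>w\<in>S. subseq (u @ [x]) w}"
  by (rule finite_subset[OF _ finite_common_subseq_lengths[OF assms]]) blast

lemma lcs_ending_ge:
  assumes "w0 \<in> S" and "\<forall>w\<in>S. subseq (u @ [x]) w"
  shows "length (u @ [x]) \<le> lcs_ending S x"
  unfolding lcs_ending_def
  using assms by (intro Max_ge finite_lcs_ending_candidates) auto

lemma lcs_ending_attained:
  assumes "w0 \<in> S" and "\<forall>w\<in>S. x \<in> set w"
  obtains u where "lcs_ending S x = length (u @ [x])" and "\<forall>w\<in>S. subseq (u @ [x]) w"
proof -
  have "\<forall>w\<in>S. subseq ([] @ [x]) w"
    using assms(2) by (simp add: subseq_singleton_left)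
  then have "{length (u @ [x]) | u. \<forall>w\<in>S. subseq (u @ [x]) w} \<noteq> {}"
    by blast
  then have "lcs_ending S x \<in> {length (u @ [x]) | u. \<forall>w\<in>S. subseq (u @ [x]) w}"
    unfolding lcs_ending_def using finite_lcs_ending_candidates[OF assms(1)] by (rule Max_in[rotated])
  with that show ?thesis by blast
qed

lemma lcs_ending_le_LCS:
  assumes "w0 \<in> S" and "\<forall>w\<in>S. x \<in> set w"
  shows "lcs_ending S x \<le> LCS S"
proof -
  obtain u where u: "lcs_ending S x = length (u @ [x])" "\<forall>w\<in>S. subseq (u @ [x]) w"
    using lcs_ending_attained[OF assms] .
  show ?thesis
    unfolding u(1) LCS_def using u(2) finite_common_subseq_lengths[OF assms(1)]
    by (intro Max_ge) blast+
qed

lemma lcs_ending_less: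
  assumes "w0 \<in> S" and "\<forall>w\<in>S. distinct w \<and> subseq [x, y] w"
  shows "lcs_ending S x < lcs_ending S y"
proof -
  have "\<forall>w\<in>S. x \<in> set w"
  proof
    fix w assume "w \<in> S"
    then have "set [x, y] \<subseteq> set w"
      using assms(2) set_subseq_subset by blast
    then show "x \<in> set w" by simp
  qed
  then obtain u where u: "lcs_ending S x = length (u @ [x])" "\<forall>w\<in>S. subseq (u @ [x]) w"
    using lcs_ending_attained[OF assms(1)] by blast
  have "\<forall>w\<in>S. subseq ((u @ [x]) @ [y]) w"
    using u(2) assms(2) subseq_snoc_extend by fastforce
  then have "length ((u @ [x]) @ [y]) \<le> lcs_ending S y"
    by (rule lcs_ending_ge[OF assms(1)])
  with u(1) show ?thesis by simp
qed

lemma LCS_le_LCS_T: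
  assumes "finite W" and "S \<subseteq> W" and "card S = T"
  shows "LCS S \<le> LCS_T T W"
proof -
  have "{LCS W' | W'. W' \<subseteq> W \<and> card W' = T} \<subseteq> LCS ` Pow W"
    by blast
  then have "finite {LCS W' | W'. W' \<subseteq> W \<and> card W' = T}"
    by (rule finite_subset) (simp add: assms(1))
  then show ?thesis
    unfolding LCS_T_def using assms(2,3) by (intro Max_ge) blast+
qed

lemma card_filter_majority:
  assumes "finite W" and "card W = 2 * T - 1" and "\<forall>w\<in>W. P w \<or> Q w"
  shows "T \<le> card {w\<in>W. P w} \<or> T \<le> card {w\<in>W. Q w}"
proof -
  have "W = {w\<in>W. P w} \<union> {w\<in>W. Q w}"
    using assms(3) by blast
  then have "card W \<le> card {w\<in>W. P w} + card {w\<in>W. Q w}"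
    by (metis card_Un_le)
  with assms(2) show ?thesis by linarith
qed

lemma lcs_endings_separate_letters:
  assumes "T \<ge> 1" and "W \<subseteq> perms k" and "card W = 2 * T - 1"
    and "x \<in> {1..k}" and "y \<in> {1..k}" and "x \<noteq> y"
  shows "\<exists>S. S \<subseteq> W \<and> card S = T \<and> lcs_ending S x \<noteq> lcs_ending S y"
proof -
  have perm: "distinct w \<and> set w = {1..k}" if "w \<in> W" for w
    using assms(2) that by (auto simp: perms_def)
  have "finite W"
    using assms(1,3) by (intro card_ge_0_finite) simp
  have ordered_pair: "\<exists>S. S \<subseteq> W \<and> card S = T \<and> lcs_ending S a < lcs_ending S b"
    if many: "T \<le> card {w\<in>W. subseq [a, b] w}" for a b
  proof -
    obtain S where S: "S \<subseteq> {w\<in>W. subseq [a, b] w}" "card S = T"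
      using obtain_subset_with_card_n[OF many] by metis
    then have "S \<noteq> {}"
      using assms(1) by auto
    then obtain w0 where "w0 \<in> S"
      by blast
    have "\<forall>w\<in>S. distinct w \<and> subseq [a, b] w"
    proof
      fix w assume "w \<in> S"
      with S(1) have "w \<in> W" and "subseq [a, b] w"
        by blast+
      then show "distinct w \<and> subseq [a, b] w"
        using perm[of w] by simp
    qed
    with \<open>w0 \<in> S\<close> have "lcs_ending S a < lcs_ending S b"
      by (rule lcs_ending_less)
    with S show ?thesis by blast
  qed
  have "\<forall>w\<in>W. subseq [x, y] w \<or> subseq [y, x] w"
  proof
    fix w assume "w \<in> W"
    then have "x \<in> set w" and "y \<in> set w"
      using perm assms(4,5) by auto
    then show "subseq [x, y] w \<or> subseq [y, x] w"
      using assms(6) by (rule subseq_pair_or_swap)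
  qed
  then have "T \<le> card {w\<in>W. subseq [x, y] w} \<or> T \<le> card {w\<in>W. subseq [y, x] w}"
    by (rule card_filter_majority[OF \<open>finite W\<close> assms(3)])
  then show ?thesis
  proof
    assume "T \<le> card {w\<in>W. subseq [x, y] w}"
    then obtain S where "S \<subseteq> W" "card S = T" "lcs_ending S x < lcs_ending S y"
      using ordered_pair by blast
    then show ?thesis
      by (intro exI[of _ S]) simp
  next
    assume "T \<le> card {w\<in>W. subseq [y, x] w}"
    then obtain S where "S \<subseteq> W" "card S = T" "lcs_ending S y < lcs_ending S x"
      using ordered_pair by blast
    then show ?thesis
      by (intro exI[of _ S]) simp
  qed
qed

lemma card_le_LCS_T_power:
  assumes "T \<ge> 1" and "W \<subseteq> perms k" and "card W = 2 * T - 1"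
  shows "k \<le> LCS_T T W ^ ((2 * T - 1) choose T)"
proof -
  define Ss where "Ss = {S. S \<subseteq> W \<and> card S = T}"
  define g where "g x = restrict (\<lambda>S. lcs_ending S x) Ss" for x
  have "finite W"
    using assms(1,3) by (intro card_ge_0_finite) simp
  have "inj_on g {1..k}"
  proof (rule inj_onI, rule ccontr)
    fix x y assume "x \<in> {1..k}" "y \<in> {1..k}" "g x = g y" "x \<noteq> y"
    then obtain S where "S \<in> Ss" "lcs_ending S x \<noteq> lcs_ending S y"
      using lcs_endings_separate_letters[OF assms] unfolding Ss_def by blast
    moreover have "g x S = g y S"
      using \<open>g x = g y\<close> by simp
    ultimately show False
      unfolding g_def by simp
  qed
  moreover have "g ` {1..k} \<subseteq> Ss \<rightarrow>\<^sub>E {1..LCS_T T W}"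
  proof -
    have "lcs_ending S x \<in> {1..LCS_T T W}" if "x \<in> {1..k}" "S \<in> Ss" for x S
    proof -
      have S: "S \<subseteq> W" "card S = T" and x: "\<forall>w\<in>S. x \<in> set w"
        using that assms(2) unfolding Ss_def perms_def by auto
      have "S \<noteq> {}"
        using S(2) assms(1) by auto
      then obtain w0 where "w0 \<in> S"
        by blast
      have "lcs_ending S x \<le> LCS_T T W"
        using lcs_ending_le_LCS[OF \<open>w0 \<in> S\<close> x] LCS_le_LCS_T[OF \<open>finite W\<close> S] by (rule le_trans)
      moreover obtain u where "lcs_ending S x = length (u @ [x])"
        using lcs_ending_attained[OF \<open>w0 \<in> S\<close> x] by blast
      ultimately show ?thesis by simp
    qed
    then show ?thesis
      unfolding g_def by auto
  qed
  moreover have "finite Ss"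
    unfolding Ss_def using \<open>finite W\<close> by (auto intro: finite_subset[of _ "Pow W"])
  then have "finite (Ss \<rightarrow>\<^sub>E {1..LCS_T T W})"
    by (simp add: finite_PiE)
  ultimately have "card {1..k} \<le> card (Ss \<rightarrow>\<^sub>E {1..LCS_T T W})"
    by (rule card_inj_on_le)
  also have "\<dots> = LCS_T T W ^ card Ss"
    using \<open>finite Ss\<close> by (simp add: card_funcsetE)
  also have "card Ss = (2 * T - 1) choose T"
    unfolding Ss_def using n_subsets[OF \<open>finite W\<close>] assms(3) by simp
  finally show ?thesis by simp
qed

lemma powr_inverse_le_of_le_power:
  fixes x y :: real
  assumes "0 \<le> x" and "0 \<le> y" and "x \<le> y ^ n" and "0 < n"
  shows "x powr (1 / real n) \<le> y"
proof -
  have "x powr (1 / real n) \<le> (y ^ n) powr (1 / real n)"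
    using assms by (intro powr_mono2) auto
  also have "\<dots> = y"
  proof (cases "y = 0")
    case False
    with assms(2) have "y ^ n = y powr real n"
      by (simp add: powr_realpow)
    with assms(2,4) show ?thesis
      by (simp add: powr_powr)
  qed (use assms(4) in simp)
  finally show ?thesis .
qed

theorem theorem25:
  fixes T k :: nat
  assumes "T \<ge> 1" and "k \<ge> 1"
  shows "ereal (real k powr (1 / real ((2*T - 1) choose T))) \<le> LCS_T_fam T (2*T - 1) (perms k)"
  unfolding LCS_T_fam_def
proof (rule INF_greatest)
  fix W assume "W \<in> {W. W \<subseteq> perms k \<and> card W = 2 * T - 1}"
  then have "k \<le> LCS_T T W ^ ((2 * T - 1) choose T)"
    using card_le_LCS_T_power[OF assms(1)] by blast
  then have "real k \<le> real (LCS_T T W) ^ ((2 * T - 1) choose T)"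
    by (metis of_nat_le_iff of_nat_power)
  moreover have "0 < (2 * T - 1) choose T"
    using assms(1) by (intro zero_less_binomial) simp
  ultimately show "ereal (real k powr (1 / real ((2*T - 1) choose T))) \<le> ereal (real (LCS_T T W))"
    using powr_inverse_le_of_le_power by simp
qed

end
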